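(* For every $n\ge1$, with $M_n$ the array indexed by $\{0,\dots,n\}^3$ defined by $(M_n)_{i,j,k}=\min\big(k\min(i,j),\ ij-(n-k)\max(0,i+j-n)\big)$, $$\sum_{0\le i,j,k\le n}(M_n)_{i,j,k}=\frac{69n^5+180n^4+170n^3+60n^2+4^{1+(-1)^n}\,n}{480}.$$
   Context: $M_n$ is the minimum element of the lattice of corner-sum hypermatrices of order $n$ (ordered by reverse entrywise comparison), i.e. the entrywise largest corner-sum hypermatrix. *)

theory Defs
  imports Complex_Main
begin

definition Mn :: "int \<Rightarrow> int \<Rightarrow> int \<Rightarrow> int \<Rightarrow> int" where
  "Mn n i j k = min (k * min i j) (i * j - (n - k) * max 0 (i + j - n))"

end

theory Submission
  imports Defs
begin

(* Fix i \<le> j (M_n is symmetric in i and j). Along k the entry is piecewise linear: i min(k, j)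
   when i + j \<le> n, and k i up to k = n - i, then slope i + j - n, when i + j > n. Summing over k
   gives a polynomial in (n, i, j) on each side of the antidiagonal; summing over j gives a
   polynomial in (n, i) on each of 2 i \<le> n and 2 i > n; summing over i then gives a polynomial
   in n and n div 2, which is where the parity term comes from. Each sum over an interval is
   evaluated by telescoping against an explicit discrete antiderivative. *)

lemma sum_int_interval_telescope:
  fixes F f :: "'a::ring_1 \<Rightarrow> 'b::ab_group_add" and a b :: int
  assumes "\<And>x. F x - F (x - 1) = f x" and "a \<le> b + 1"
  shows "(\<Sum>x\<in>{a..b}. f (of_int x)) = F (of_int b) - F (of_int a - 1)"
proof -
  from \<open>a \<le> b + 1\<close> have "a - 1 \<le> b"
    by simp
  then show ?thesis
  proof (induction b rule: int_ge_induct)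
    case base
    then show ?case by simp
  next
    case (step b)
    have "{a..b + 1} = insert (b + 1) {a..b}"
      using step.hyps by auto
    then show ?case
      using step.IH assms(1)[of "of_int b + 1"] by (simp add: algebra_simps)
  qed
qed

lemma sum_int_interval_split:
  fixes g :: "int \<Rightarrow> 'a::comm_monoid_add"
  assumes "a \<le> b + 1" and "b \<le> c"
  shows "sum g {a..c} = sum g {a..b} + sum g {b + 1..c}"
proof -
  have "{a..c} = {a..b} \<union> {b + 1..c}"
    using assms by auto
  then show ?thesis
    by (simp add: sum.union_disjoint)
qed

lemma Mn_commute: "Mn n i j k = Mn n j i k"
  unfolding Mn_def by (simp add: min.commute add.commute mult.commute)

lemma Mn_below_antidiagonal:
  assumes "0 \<le> i" and "i \<le> j" and "i + j \<le> n"
  shows "Mn n i j k = i * min k j"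
proof -
  have "Mn n i j k = min (i * k) (i * j)"
    using assms by (simp add: Mn_def mult.commute)
  then show ?thesis
    using assms by (simp add: min_mult_distrib_left)
qed

lemma Mn_above_antidiagonal:
  assumes "i \<le> j" and "j \<le> n" and "n < i + j"
  shows "Mn n i j k = (if k \<le> n - i then k * i else k * i - (k - (n - i)) * (n - j))"
proof -
  have "Mn n i j k = min (k * i) (k * i + (n - j) * (n - i - k))"
    using assms by (simp add: Mn_def algebra_simps)
  moreover have "k * i + (n - j) * (n - i - k) = k * i - (k - (n - i)) * (n - j)"
    by (simp add: algebra_simps)
  moreover have "0 \<le> (n - j) * (n - i - k)" if "k \<le> n - i"
    using that assms by simp
  moreover have "0 \<le> (k - (n - i)) * (n - j)" if "\<not> k \<le> n - i"
    using that assms by simp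
  ultimately show ?thesis
    by auto
qed

definition fiber_sum_below :: "real \<Rightarrow> real \<Rightarrow> real \<Rightarrow> real" where
  "fiber_sum_below N I J = I * J * (2 * N - J + 1) / 2"

definition fiber_sum_above :: "real \<Rightarrow> real \<Rightarrow> real \<Rightarrow> real" where
  "fiber_sum_above N I J = I * (N * (N + 1) - (N - J) * (I + 1)) / 2"

lemma sum_Mn_fiber_below:
  assumes "0 \<le> i" and "i \<le> j" and "i + j \<le> n"
  shows "(\<Sum>k\<in>{0..n}. real_of_int (Mn n i j k))
    = fiber_sum_below (of_int n) (of_int i) (of_int j)"
proof -
  define N I J where "N = real_of_int n" and "I = real_of_int i" and "J = real_of_int j"
  have "(\<Sum>k\<in>{0..n}. real_of_int (Mn n i j k))
      = (\<Sum>k\<in>{0..j}. real_of_int (Mn n i j k)) + (\<Sum>k\<in>{j + 1..n}. real_of_int (Mn n i j k))"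
    using assms by (intro sum_int_interval_split) auto
  also have "(\<Sum>k\<in>{0..j}. real_of_int (Mn n i j k)) = (\<Sum>k\<in>{0..j}. I * of_int k)"
    using assms by (intro sum.cong) (auto simp: Mn_below_antidiagonal I_def)
  also have "\<dots> = I * J * (J + 1) / 2"
    using assms by (subst sum_int_interval_telescope[where F = "\<lambda>x. I * x * (x + 1) / 2"])
      (auto simp: field_simps J_def)
  also have "(\<Sum>k\<in>{j + 1..n}. real_of_int (Mn n i j k)) = (\<Sum>k\<in>{j + 1..n}. I * J)"
    using assms by (intro sum.cong) (auto simp: Mn_below_antidiagonal I_def J_def)
  also have "\<dots> = (N - J) * I * J"
    using assms by (simp add: N_def J_def)
  finally show ?thesis
    by (simp add: fiber_sum_below_def N_def I_def J_def field_simps)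
qed

lemma sum_Mn_fiber_above:
  assumes "0 \<le> i" and "i \<le> j" and "j \<le> n" and "n < i + j"
  shows "(\<Sum>k\<in>{0..n}. real_of_int (Mn n i j k))
    = fiber_sum_above (of_int n) (of_int i) (of_int j)"
proof -
  define N I J where "N = real_of_int n" and "I = real_of_int i" and "J = real_of_int j"
  have "(\<Sum>k\<in>{0..n}. real_of_int (Mn n i j k))
      = (\<Sum>k\<in>{0..n - i}. real_of_int (Mn n i j k)) + (\<Sum>k\<in>{n - i + 1..n}. real_of_int (Mn n i j k))"
    using assms by (intro sum_int_interval_split) auto
  also have "(\<Sum>k\<in>{0..n - i}. real_of_int (Mn n i j k)) = (\<Sum>k\<in>{0..n - i}. I * of_int k)"
    using assms by (intro sum.cong) (auto simp: Mn_above_antidiagonal I_def)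
  also have "\<dots> = I * (N - I) * (N - I + 1) / 2"
    using assms by (subst sum_int_interval_telescope[where F = "\<lambda>x. I * x * (x + 1) / 2"])
      (auto simp: field_simps N_def I_def)
  also have "(\<Sum>k\<in>{n - i + 1..n}. real_of_int (Mn n i j k))
      = (\<Sum>k\<in>{n - i + 1..n}. of_int k * I - (of_int k - (N - I)) * (N - J))"
    using assms by (intro sum.cong) (auto simp: Mn_above_antidiagonal N_def I_def J_def)
  also have "\<dots> = I * (2 * N - I + 1) / 2 * I - I * (I + 1) / 2 * (N - J)"
    using assms
    by (subst sum_int_interval_telescope[where F = "\<lambda>x. (I + J - N) * x * (x + 1) / 2 + (N - I) * (N - J) * x"])
      (auto simp: field_simps N_def I_def J_def)
  finally show ?thesis
    by (simp add: fiber_sum_above_def N_def I_def J_def field_simps)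
qed

definition slice_sum_low :: "real \<Rightarrow> real \<Rightarrow> real" where
  "slice_sum_low N I = (I * N * (N + 1) * (2 * N + 1) - I^2 * (I^2 - 1)) / 6"

definition slice_sum_high :: "real \<Rightarrow> real \<Rightarrow> real" where
  "slice_sum_high N I = (6 * I * N^2 + 10 * I * N^3 + 2 * I^2 - 12 * I^2 * N^2 + 8 * I^3 * N
    - 2 * I^4 + N^2 - N^4) / 12"

lemma sum_Mn_slice_low:
  assumes "0 \<le> i" and "2 * i \<le> n"
  shows "(\<Sum>j\<in>{0..n}. \<Sum>k\<in>{0..n}. real_of_int (Mn n i j k))
    = slice_sum_low (of_int n) (of_int i)"
proof -
  define N I where "N = real_of_int n" and "I = real_of_int i"
  define S where "S j = (\<Sum>k\<in>{0..n}. real_of_int (Mn n i j k))" for j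
  have "sum S {0..n} = sum S {0..i - 1} + sum S {i..n - i} + sum S {n - i + 1..n}"
    using assms sum_int_interval_split[of 0 "i - 1" n S] sum_int_interval_split[of i "n - i" n S]
    by simp
  also have "sum S {0..i - 1} = (\<Sum>j\<in>{0..i - 1}. fiber_sum_below N (of_int j) I)"
    using assms
    by (intro sum.cong) (auto simp: S_def N_def I_def Mn_commute[of n i] sum_Mn_fiber_below)
  also have "\<dots> = (I - 1) * I * I * (2 * N + 1 - I) / 4"
    using assms
    by (subst sum_int_interval_telescope[where F = "\<lambda>x. x * (x + 1) * I * (2 * N + 1 - I) / 4"])
      (auto simp: fiber_sum_below_def field_simps I_def)
  also have "sum S {i..n - i} = (\<Sum>j\<in>{i..n - i}. fiber_sum_below N I (of_int j))"
    using assms by (intro sum.cong) (auto simp: S_def N_def I_def sum_Mn_fiber_below)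
  also have "\<dots> = I * (N - I) * (N - I + 1) * (2 * N + 1 + I) / 6 - I * (I - 1) * I * (3 * N + 2 - I) / 6"
    using assms
    by (subst sum_int_interval_telescope[where F = "\<lambda>x. I * x * (x + 1) * (3 * N + 1 - x) / 6"])
      (auto simp: fiber_sum_below_def field_simps N_def I_def)
  also have "sum S {n - i + 1..n} = (\<Sum>j\<in>{n - i + 1..n}. fiber_sum_above N I (of_int j))"
    using assms by (intro sum.cong) (auto simp: S_def N_def I_def sum_Mn_fiber_above)
  also have "\<dots> = (N + 1) * (2 * I * N * (N - I) + N * I * (I + 1)) / 4
      - (N - I + 1) * (2 * I * N * (N - I) + (N - I) * I * (I + 1)) / 4"
    using assms
    by (subst sum_int_interval_telescope[where F = "\<lambda>x. (x + 1) * (2 * I * N * (N - I) + x * I * (I + 1)) / 4"])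
      (auto simp: fiber_sum_above_def field_simps N_def I_def)
  finally show ?thesis
    by (simp add: S_def slice_sum_low_def N_def I_def field_simps power2_eq_square power4_eq_xxxx)
qed

lemma sum_Mn_slice_high:
  assumes "i \<le> n" and "n < 2 * i"
  shows "(\<Sum>j\<in>{0..n}. \<Sum>k\<in>{0..n}. real_of_int (Mn n i j k))
    = slice_sum_high (of_int n) (of_int i)"
proof -
  define N I where "N = real_of_int n" and "I = real_of_int i"
  define S where "S j = (\<Sum>k\<in>{0..n}. real_of_int (Mn n i j k))" for j
  have "sum S {0..n} = sum S {0..n - i} + sum S {n - i + 1..i - 1} + sum S {i..n}"
    using assms sum_int_interval_split[of 0 "n - i" n S] sum_int_interval_split[of "n - i + 1" "i - 1" n S]
    by simp
  also have "sum S {0..n - i} = (\<Sum>j\<in>{0..n - i}. fiber_sum_below N (of_int j) I)"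
    using assms
    by (intro sum.cong) (auto simp: S_def N_def I_def Mn_commute[of n i] sum_Mn_fiber_below)
  also have "\<dots> = (N - I) * (N - I + 1) * I * (2 * N + 1 - I) / 4"
    using assms
    by (subst sum_int_interval_telescope[where F = "\<lambda>x. x * (x + 1) * I * (2 * N + 1 - I) / 4"])
      (auto simp: fiber_sum_below_def field_simps N_def I_def)
  also have "sum S {n - i + 1..i - 1} = (\<Sum>j\<in>{n - i + 1..i - 1}. fiber_sum_above N (of_int j) I)"
    using assms
    by (intro sum.cong) (auto simp: S_def N_def I_def Mn_commute[of n i] sum_Mn_fiber_above)
  also have "\<dots> = (I - 1) * I * N * (N + 1) / 4 - (N - I) * (I - 1) * I * (I + 1) / 6
      - (N - I) * (N - I + 1) * N * (N + 1) / 4 + (N - I) * (N - I) * (N - I + 1) * (N - I + 2) / 6"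
    using assms
    by (subst sum_int_interval_telescope[where F = "\<lambda>x. x * (x + 1) * N * (N + 1) / 4 - (N - I) * x * (x + 1) * (x + 2) / 6"])
      (auto simp: fiber_sum_above_def field_simps N_def I_def)
  also have "sum S {i..n} = (\<Sum>j\<in>{i..n}. fiber_sum_above N I (of_int j))"
    using assms by (intro sum.cong) (auto simp: S_def N_def I_def sum_Mn_fiber_above)
  also have "\<dots> = (N + 1) * (2 * I * N * (N - I) + N * I * (I + 1)) / 4
      - I * (2 * I * N * (N - I) + (I - 1) * I * (I + 1)) / 4"
    using assms
    by (subst sum_int_interval_telescope[where F = "\<lambda>x. (x + 1) * (2 * I * N * (N - I) + x * I * (I + 1)) / 4"])
      (auto simp: fiber_sum_above_def field_simps N_def I_def)
  finally show ?thesis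
    by (simp add: S_def slice_sum_high_def N_def I_def field_simps eval_nat_numeral)
qed

lemma sum_Mn:
  assumes "0 \<le> n"
  shows "(\<Sum>i\<in>{0..n}. \<Sum>j\<in>{0..n}. \<Sum>k\<in>{0..n}. real_of_int (Mn n i j k))
    = (69 * of_int n ^ 5 + 180 * of_int n ^ 4 + 170 * of_int n ^ 3 + 60 * of_int n ^ 2
       + (if even n then 16 else 1) * of_int n) / 480"
proof -
  define N M where "N = real_of_int n" and "M = real_of_int (n div 2)"
  define T where "T i = (\<Sum>j\<in>{0..n}. \<Sum>k\<in>{0..n}. real_of_int (Mn n i j k))" for i
  define F_low where "F_low x = (5 * N * (N + 1) * (2 * N + 1) * x * (x + 1)
    + 2 * x + 5 * x^2 - 5 * x^4 - 2 * x^5) / 60" for x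
  define F_high where "F_high x = (10 * N * x^2 + 20 * N * x^3 + 10 * N * x^4 + 10 * N^2 * x
    - 15 * N^2 * x^2 - 20 * N^2 * x^3 + 25 * N^3 * x + 25 * N^3 * x^2 - 5 * N^4 * x
    + 2 * x + 5 * x^2 - 5 * x^4 - 2 * x^5) / 60" for x
  have "sum T {0..n} = sum T {0..n div 2} + sum T {n div 2 + 1..n}"
    using assms by (intro sum_int_interval_split) auto
  also have "sum T {0..n div 2} = (\<Sum>i\<in>{0..n div 2}. slice_sum_low N (of_int i))"
    using assms by (intro sum.cong) (auto simp: T_def N_def sum_Mn_slice_low)
  also have "\<dots> = F_low M"
    using assms
    by (subst sum_int_interval_telescope[where F = F_low])
      (auto simp: F_low_def slice_sum_low_def M_def field_simps eval_nat_numeral)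
  also have "sum T {n div 2 + 1..n} = (\<Sum>i\<in>{n div 2 + 1..n}. slice_sum_high N (of_int i))"
    using assms by (intro sum.cong) (auto simp: T_def N_def sum_Mn_slice_high)
  also have "\<dots> = F_high N - F_high M"
    using assms
    by (subst sum_int_interval_telescope[where F = F_high])
      (auto simp: F_high_def slice_sum_high_def N_def M_def field_simps eval_nat_numeral)
  finally have "sum T {0..n} = F_low M + F_high N - F_high M"
    by simp
  moreover have "N = 2 * M + (if even n then 0 else 1)"
    unfolding N_def M_def by (cases "even n") (auto elim!: evenE oddE)
  ultimately show ?thesis
    by (cases "even n") (simp_all add: T_def N_def[symmetric] F_low_def F_high_def field_simps eval_nat_numeral)
qed

theorem mainTheorem10:
  fixes n :: nat
  assumes "n \<ge> 1"
  shows "real_of_int (\<Sum>i\<in>{0..int n}. \<Sum>j\<in>{0..int n}. \<Sum>k\<in>{0..int n}. Mn (int n) i j k)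
       = (69 * real n ^ 5 + 180 * real n ^ 4 + 170 * real n ^ 3 + 60 * real n ^ 2
          + 4 powi (1 + (-1::int) ^ n) * real n) / 480"
proof -
  have "(4::real) powi (1 + (-1::int) ^ n) = (if even n then 16 else 1)"
    by simp
  then show ?thesis
    using sum_Mn[of "int n"] by (simp add: of_int_sum)
qed
end
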